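(* Let $p>2$ and let $r=p/(p-1)$. Let $x=\sum_{i=1}^m\lambda_ie_i\in\mathbb{R}^m$ with $\|x\|_p=1$ and $\lambda_i\neq0$ for all $i\in\{1,\dots,m\}$, and let $d\in\mathbb{R}^m$ be given by $d_i=\operatorname{sign}(\lambda_i)|\lambda_i|^{p-1}$ (the unique vector with $\|d\|_r=1$ in the normal cone of the unit $\ell_p$ ball at $x$). Then there exists $\alpha>0$ such that the unit $\ell_p$ ball $\ell_p(1)=\{y:\|y\|_p\leq1\}$ is $(\alpha,2)$-locally uniformly convex at $x$ with respect to $d$, i.e. for every $\epsilon\in[0,2]$, $\inf\{\langle d,x-y\rangle: y\in\ell_p(1),\ \|x-y\|_p\geq\epsilon\}\geq\alpha\epsilon^2$; equivalently, $\langle d,x-y\rangle\geq\alpha\|x-y\|_p^2$ for all $y\in\ell_p(1)$.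
   Context: $e_1,\dots,e_m$ is the canonical basis of $\mathbb{R}^m$ and $\|\cdot\|_p$ the $\ell_p$ norm; its dual norm is $\|\cdot\|_r$ with $1/p+1/r=1$. *)

theory Defs
  imports "HOL-Analysis.Analysis"
begin

definition lp_norm :: "real \<Rightarrow> real^'m \<Rightarrow> real" where
  "lp_norm p x = (\<Sum>i\<in>UNIV. \<bar>x $ i\<bar> powr p) powr (1 / p)"

definition lp_ball :: "real \<Rightarrow> (real^'m) set" where
  "lp_ball p = {y. lp_norm p y \<le> 1}"

text \<open>(alpha,q)-local uniform convexity of K at x w.r.t. d, measured in the norm nrm:
  for every eps in [0,2], the infimum of <d, x - y> over y in K with nrm (x - y) \<ge> eps
  is at least alpha * eps^q (infimum of the empty set read as +infinity).\<close>
definition locally_uniformly_convex_at ::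
  "real \<Rightarrow> nat \<Rightarrow> (real^'m) set \<Rightarrow> (real^'m \<Rightarrow> real) \<Rightarrow> real^'m \<Rightarrow> real^'m \<Rightarrow> bool" where
  "locally_uniformly_convex_at \<alpha> q K nrm x d \<longleftrightarrow>
     (\<forall>\<epsilon>\<in>{0..2}. \<forall>y\<in>K. nrm (x - y) \<ge> \<epsilon> \<longrightarrow> d \<bullet> (x - y) \<ge> \<alpha> * \<epsilon> ^ q)"

end

theory Submission
  imports Defs
begin

text \<open>For p > 2 the function t \<mapsto> |t|^p lies above its tangent at a \<noteq> 0 by a quadratic
  c(a) (t - a)^2 on the window |t - a| \<le> 2, which contains every coordinate of a point of the
  unit ball: for t \<ge> a/2 by Taylor's theorem, since the second derivative of t^p is bounded
  below there, and for t < a/2 because the tangent line already drops below -|a|^p. Summing over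
  the coordinates and using \<Sum> |y_i|^p \<le> 1 = \<Sum> |x_i|^p gives
  c \<parallel>x - y\<parallel>_2^2 \<le> p \<langle>d, x - y\<rangle> for every y in the ball, with c the least of the c(x_i);
  finally \<parallel>v\<parallel>_p \<le> m^(1/p) \<parallel>v\<parallel>_2.\<close>

lemma powr_ge_second_order_Taylor:
  fixes p a t :: real
  assumes p: "p \<ge> 2" and a: "a > 0" and t: "t \<ge> a / 2"
  shows "t powr p \<ge> a powr p + p * a powr (p - 1) * (t - a)
                     + p * (p - 1) / 2 * (a / 2) powr (p - 2) * (t - a)\<^sup>2"
proof (cases "t = a")
  case True
  then show ?thesis by simp
next
  case False
  define f where "f = (\<lambda>m::nat. \<lambda>s::real. if m = 0 then s powr p
      else if m = 1 then p * s powr (p - 1) else p * (p - 1) * s powr (p - 2))"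
  have f_deriv: "DERIV (f m) s :> f (Suc m) s" if "m < 2" and s: "s > 0" for m s
  proof (cases "m = 0")
    case True
    then show ?thesis unfolding f_def using has_real_derivative_powr[OF s, of p] by simp
  next
    case False
    with \<open>m < 2\<close> have "m = 1" by simp
    have "DERIV (\<lambda>s. p * s powr (p - 1)) s :> p * ((p - 1) * s powr (p - 1 - 1))"
      by (intro DERIV_cmult has_real_derivative_powr s)
    then show ?thesis unfolding f_def using \<open>m = 1\<close> by (simp add: algebra_simps)
  qed
  obtain \<xi> where \<xi>: "if t < a then t < \<xi> \<and> \<xi> < a else a < \<xi> \<and> \<xi> < t"
    and expansion: "f 0 t = (\<Sum>m<2. f m a / fact m * (t - a) ^ m) + f 2 \<xi> / fact 2 * (t - a) ^ 2"
    using Taylor[of 2 f "f 0" "a / 2" "max t a" a t] f_deriv a t False by force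
  have "\<xi> \<ge> a / 2"
    using \<xi> t a by (auto split: if_splits)
  then have "(a / 2) powr (p - 2) \<le> \<xi> powr (p - 2)"
    using a p by (intro powr_mono2) auto
  then have "p * (p - 1) / 2 * (a / 2) powr (p - 2) * (t - a)\<^sup>2
               \<le> p * (p - 1) / 2 * \<xi> powr (p - 2) * (t - a)\<^sup>2"
    using p by (intro mult_right_mono mult_left_mono) auto
  moreover have "t powr p = a powr p + p * a powr (p - 1) * (t - a)
                              + p * (p - 1) / 2 * \<xi> powr (p - 2) * (t - a)\<^sup>2"
    using expansion by (simp add: f_def numeral_2_eq_2)
  ultimately show ?thesis by linarith
qed

text \<open>The first term serves points t < a/2, the second is the Taylor bound of the lemma above.\<close>
definition abs_powr_convexity_const :: "real \<Rightarrow> real \<Rightarrow> real" where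
  "abs_powr_convexity_const p a =
     min ((p / 2 - 1) * a powr p / 4) (p * (p - 1) / 2 * (a / 2) powr (p - 2))"

lemma abs_powr_convexity_const_pos:
  "p > 2 \<Longrightarrow> a > 0 \<Longrightarrow> abs_powr_convexity_const p a > 0"
  unfolding abs_powr_convexity_const_def by auto

lemma powr_ge_tangent_plus_quadratic:
  fixes p a t :: real
  assumes p: "p > 2" and a: "a > 0" and t: "\<bar>t - a\<bar> \<le> 2"
  shows "\<bar>t\<bar> powr p \<ge> a powr p + p * a powr (p - 1) * (t - a)
                        + abs_powr_convexity_const p a * (t - a)\<^sup>2"
proof (cases "t \<ge> a / 2")
  case True
  have "abs_powr_convexity_const p a * (t - a)\<^sup>2 \<le> p * (p - 1) / 2 * (a / 2) powr (p - 2) * (t - a)\<^sup>2"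
    unfolding abs_powr_convexity_const_def by (intro mult_right_mono) auto
  moreover have "\<bar>t\<bar> = t"
    using True a by simp
  ultimately show ?thesis
    using powr_ge_second_order_Taylor[of p a t] p a True by linarith
next
  case False
  have "p * a powr (p - 1) * (t - a) \<le> p * a powr (p - 1) * (- a / 2)"
    using False p a by (intro mult_left_mono) auto
  also have "\<dots> = - (p / 2) * a powr p"
    using a by (simp add: powr_diff field_simps)
  finally have tangent: "p * a powr (p - 1) * (t - a) \<le> - (p / 2) * a powr p" .
  have "(t - a)\<^sup>2 \<le> 4"
    using t abs_le_square_iff[of "t - a" 2] by simp
  then have "abs_powr_convexity_const p a * (t - a)\<^sup>2 \<le> abs_powr_convexity_const p a * 4"
    using abs_powr_convexity_const_pos[OF p a] by (intro mult_left_mono) auto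
  also have "\<dots> \<le> (p / 2 - 1) * a powr p / 4 * 4"
    unfolding abs_powr_convexity_const_def by (intro mult_right_mono min.cobounded1) simp
  also have "\<dots> = (p / 2 - 1) * a powr p"
    by simp
  finally have "abs_powr_convexity_const p a * (t - a)\<^sup>2 \<le> (p / 2 - 1) * a powr p" .
  moreover have "a powr p - (p / 2) * a powr p + (p / 2 - 1) * a powr p = 0"
    by (simp add: algebra_simps)
  ultimately show ?thesis
    using tangent powr_ge_zero[of "\<bar>t\<bar>" p] by linarith
qed

lemma abs_powr_ge_tangent_plus_quadratic:
  fixes p a t :: real
  assumes p: "p > 2" and a: "a \<noteq> 0" and t: "\<bar>t - a\<bar> \<le> 2"
  shows "\<bar>t\<bar> powr p \<ge> \<bar>a\<bar> powr p + p * (sgn a * \<bar>a\<bar> powr (p - 1)) * (t - a)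
                        + abs_powr_convexity_const p \<bar>a\<bar> * (t - a)\<^sup>2"
proof (cases "a > 0")
  case True
  then show ?thesis
    using powr_ge_tangent_plus_quadratic[OF p True t] by simp
next
  case False
  with a have "- a > 0" and "\<bar>a\<bar> = - a" and "sgn a = - 1"
    by auto
  moreover have "\<bar>- t - - a\<bar> \<le> 2"
    using t by simp
  ultimately show ?thesis
    using powr_ge_tangent_plus_quadratic[OF p \<open>- a > 0\<close>, of "- t"]
    by (simp add: algebra_simps power2_eq_square)
qed

lemma sum_abs_powr_ge_tangent_plus_quadratic:
  fixes x y :: "real^'m"
  assumes p: "p > 2" and x: "\<forall>i. x $ i \<noteq> 0" and close: "\<And>i. \<bar>y $ i - x $ i\<bar> \<le> 2"
    and c: "\<And>i. c \<le> abs_powr_convexity_const p \<bar>x $ i\<bar>"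
  shows "(\<Sum>i\<in>UNIV. \<bar>y $ i\<bar> powr p) \<ge> (\<Sum>i\<in>UNIV. \<bar>x $ i\<bar> powr p)
           - p * ((\<chi> i. sgn (x $ i) * \<bar>x $ i\<bar> powr (p - 1)) \<bullet> (x - y)) + c * (norm (x - y))\<^sup>2"
proof -
  define d :: "real^'m" where "d = (\<chi> i. sgn (x $ i) * \<bar>x $ i\<bar> powr (p - 1))"
  have "\<bar>x $ i\<bar> powr p - p * (d $ i * (x $ i - y $ i)) + c * ((x - y) $ i * (x - y) $ i)
          \<le> \<bar>y $ i\<bar> powr p" for i
  proof -
    have "c * (y $ i - x $ i)\<^sup>2 \<le> abs_powr_convexity_const p \<bar>x $ i\<bar> * (y $ i - x $ i)\<^sup>2"
      using c by (intro mult_right_mono) auto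
    with abs_powr_ge_tangent_plus_quadratic[OF p x[rule_format] close, of i]
    show ?thesis
      unfolding d_def by (simp add: algebra_simps power2_eq_square)
  qed
  then have "(\<Sum>i\<in>UNIV. \<bar>x $ i\<bar> powr p - p * (d $ i * (x $ i - y $ i)) + c * ((x - y) $ i * (x - y) $ i))
               \<le> (\<Sum>i\<in>UNIV. \<bar>y $ i\<bar> powr p)"
    by (rule sum_mono)
  then show ?thesis
    unfolding d_def[symmetric] dot_square_norm[symmetric]
    by (simp add: inner_vec_def sum.distrib sum_subtractf sum_distrib_left)
qed

lemma lp_norm_nonneg: "lp_norm p v \<ge> 0"
  unfolding lp_norm_def by simp

lemma lp_norm_powr:
  "p > 0 \<Longrightarrow> lp_norm p v powr p = (\<Sum>i\<in>UNIV. \<bar>v $ i\<bar> powr p)"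
  unfolding lp_norm_def by (simp add: powr_powr sum_nonneg)

lemma abs_component_le_lp_norm:
  assumes "p > 0"
  shows "\<bar>v $ i\<bar> \<le> lp_norm p v"
proof -
  have "\<bar>v $ i\<bar> = (\<bar>v $ i\<bar> powr p) powr (1 / p)"
    using assms by (simp add: powr_powr)
  also have "\<dots> \<le> lp_norm p v"
    unfolding lp_norm_def using assms by (intro powr_mono2 member_le_sum) auto
  finally show ?thesis .
qed

lemma lp_norm_le_card_powr_norm:
  fixes v :: "real^'m"
  assumes p: "p > 0"
  shows "lp_norm p v \<le> real CARD('m) powr (1 / p) * norm v"
proof -
  have "(\<Sum>i\<in>UNIV. \<bar>v $ i\<bar> powr p) \<le> (\<Sum>i\<in>(UNIV::'m set). norm v powr p)"
    using p by (intro sum_mono powr_mono2 component_le_norm_cart) auto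
  then have "lp_norm p v \<le> (real CARD('m) * norm v powr p) powr (1 / p)"
    unfolding lp_norm_def using p by (intro powr_mono2) (auto intro: sum_nonneg)
  also have "\<dots> = real CARD('m) powr (1 / p) * norm v"
    using p by (simp add: powr_mult powr_powr)
  finally show ?thesis .
qed

lemma lp_ball_inner_ge_norm_sq:
  fixes x :: "real^'m"
  assumes p: "p > 2" and x_norm: "lp_norm p x = 1" and x: "\<forall>i. x $ i \<noteq> 0"
  obtains c where "c > 0" and "\<And>y. y \<in> lp_ball p \<Longrightarrow>
    c * (norm (x - y))\<^sup>2 \<le> (\<chi> i. sgn (x $ i) * \<bar>x $ i\<bar> powr (p - 1)) \<bullet> (x - y)"
proof
  define c where "c = Min (range (\<lambda>i. abs_powr_convexity_const p \<bar>x $ i\<bar>))"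
  have "c \<in> range (\<lambda>i. abs_powr_convexity_const p \<bar>x $ i\<bar>)"
    unfolding c_def by (intro Min_in) auto
  then show "c / p > 0"
    using abs_powr_convexity_const_pos[OF p] x p by auto
  have c_le: "c \<le> abs_powr_convexity_const p \<bar>x $ i\<bar>" for i
    unfolding c_def by (auto intro: Min_le)
  fix y :: "real^'m"
  assume "y \<in> lp_ball p"
  then have y_norm: "lp_norm p y \<le> 1"
    unfolding lp_ball_def by simp
  have "(\<Sum>i\<in>UNIV. \<bar>y $ i\<bar> powr p) = lp_norm p y powr p"
    using p lp_norm_powr[of p y] by simp
  also have "\<dots> \<le> 1"
    using y_norm p lp_norm_nonneg[of p y] by (intro powr_le1) auto
  finally have "(\<Sum>i\<in>UNIV. \<bar>y $ i\<bar> powr p) \<le> 1" .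
  moreover have "(\<Sum>i\<in>UNIV. \<bar>x $ i\<bar> powr p) = 1"
    using p x_norm lp_norm_powr[of p x] by simp
  moreover have close: "\<bar>y $ i - x $ i\<bar> \<le> 2" for i
    using abs_component_le_lp_norm[of p y i] abs_component_le_lp_norm[of p x i] x_norm y_norm p
    by (smt (verit))
  ultimately show "c / p * (norm (x - y))\<^sup>2 \<le> (\<chi> i. sgn (x $ i) * \<bar>x $ i\<bar> powr (p - 1)) \<bullet> (x - y)"
    using sum_abs_powr_ge_tangent_plus_quadratic[OF p x close c_le] p
    by (simp add: field_simps)
qed

lemma locally_uniformly_convex_atI:
  assumes "\<alpha> \<ge> 0"
    and "\<And>y. y \<in> K \<Longrightarrow> \<alpha> * nrm (x - y) ^ q \<le> d \<bullet> (x - y)"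
  shows "locally_uniformly_convex_at \<alpha> q K nrm x d"
  unfolding locally_uniformly_convex_at_def
proof (intro ballI impI)
  fix \<epsilon> y
  assume "\<epsilon> \<in> {0..2}" and "y \<in> K" and "nrm (x - y) \<ge> \<epsilon>"
  then have "\<alpha> * \<epsilon> ^ q \<le> \<alpha> * nrm (x - y) ^ q"
    using assms(1) by (intro mult_left_mono power_mono) auto
  with assms(2)[OF \<open>y \<in> K\<close>] show "\<alpha> * \<epsilon> ^ q \<le> d \<bullet> (x - y)"
    by linarith
qed

theorem mainTheorem2:
  fixes p :: real and x :: "real^'m"
  assumes "p > 2"
    and "lp_norm p x = 1"
    and "\<forall>i. x $ i \<noteq> 0"
  shows "\<exists>\<alpha>>0. locally_uniformly_convex_at \<alpha> 2 (lp_ball p) (lp_norm p) x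
           (\<chi> i. sgn (x $ i) * \<bar>x $ i\<bar> powr (p - 1))"
proof -
  define d :: "real^'m" where "d = (\<chi> i. sgn (x $ i) * \<bar>x $ i\<bar> powr (p - 1))"
  obtain c where "c > 0" and c: "\<And>y. y \<in> lp_ball p \<Longrightarrow> c * (norm (x - y))\<^sup>2 \<le> d \<bullet> (x - y)"
    using lp_ball_inner_ge_norm_sq[OF assms] unfolding d_def by blast
  define C where "C = real CARD('m) powr (1 / p)"
  have "C > 0"
    unfolding C_def by simp
  have "c / C\<^sup>2 * (lp_norm p (x - y))\<^sup>2 \<le> d \<bullet> (x - y)" if "y \<in> lp_ball p" for y
  proof -
    have "(lp_norm p (x - y))\<^sup>2 \<le> (C * norm (x - y))\<^sup>2"
      using lp_norm_le_card_powr_norm[of p "x - y"] \<open>p > 2\<close>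
      unfolding C_def by (intro power_mono lp_norm_nonneg) auto
    then have "c / C\<^sup>2 * (lp_norm p (x - y))\<^sup>2 \<le> c * (norm (x - y))\<^sup>2"
      using \<open>c > 0\<close> \<open>C > 0\<close> by (simp add: field_simps power_mult_distrib)
    with c[OF that] show ?thesis
      by linarith
  qed
  then have "locally_uniformly_convex_at (c / C\<^sup>2) 2 (lp_ball p) (lp_norm p) x d"
    using \<open>c > 0\<close> by (intro locally_uniformly_convex_atI) auto
  moreover have "c / C\<^sup>2 > 0"
    using \<open>c > 0\<close> \<open>C > 0\<close> by simp
  ultimately show ?thesis
    unfolding d_def by blast
qed

end
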